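(* For every $n\ge 2$, the operator system $C(S^1)^{(n)}$ of $n\times n$ complex Toeplitz matrices is hyperrigid in $M_n(\mathbb C)$.
   Context: $C(S^1)^{(n)}\subseteq M_n(\mathbb C)$ is the set of Toeplitz matrices $[\tau_{k-\ell}]_{k,\ell=0}^{n-1}$. An operator subsystem $\mathcal R$ of a unital C$^*$-algebra $\mathcal A$ is hyperrigid in $\mathcal A$ if, for every representation $\pi:\mathcal A\to B(\mathcal H_\pi)$, the unital completely positive map $\pi|_{\mathcal R}$ has a unique extension to a completely positive linear map on $\mathcal A$ (namely $\pi$ itself). *)

theory Defs
  imports Complex_Main "Jordan_Normal_Form.Schur_Decomposition"
begin

text \<open>A complex Hilbert space structure on the additive group 'h: complex scalar
  multiplication sc and inner product ip (linear in the first argument),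
  complete w.r.t. the induced norm.\<close>

definition hnorm :: "('h \<Rightarrow> 'h \<Rightarrow> complex) \<Rightarrow> 'h \<Rightarrow> real" where
  "hnorm ip x = sqrt (Re (ip x x))"

definition complex_hilbert_space ::
  "(complex \<Rightarrow> 'h::ab_group_add \<Rightarrow> 'h) \<Rightarrow> ('h \<Rightarrow> 'h \<Rightarrow> complex) \<Rightarrow> bool" where
  "complex_hilbert_space sc ip \<longleftrightarrow>
     (\<forall>a x y. sc a (x + y) = sc a x + sc a y) \<and>
     (\<forall>a b x. sc (a + b) x = sc a x + sc b x) \<and>
     (\<forall>a b x. sc a (sc b x) = sc (a * b) x) \<and>
     (\<forall>x. sc 1 x = x) \<and>
     (\<forall>x y z. ip (x + y) z = ip x z + ip y z) \<and>
     (\<forall>a x y. ip (sc a x) y = a * ip x y) \<and>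
     (\<forall>x y. ip y x = cnj (ip x y)) \<and>
     (\<forall>x. Im (ip x x) = 0 \<and> Re (ip x x) \<ge> 0) \<and>
     (\<forall>x. ip x x = 0 \<longrightarrow> x = 0) \<and>
     (\<forall>X :: nat \<Rightarrow> 'h.
        (\<forall>e>0. \<exists>N. \<forall>m\<ge>N. \<forall>k\<ge>N. hnorm ip (X m - X k) < e) \<longrightarrow>
        (\<exists>L. \<forall>e>0. \<exists>N. \<forall>m\<ge>N. hnorm ip (X m - L) < e))"

definition bounded_op ::
  "(complex \<Rightarrow> 'h::ab_group_add \<Rightarrow> 'h) \<Rightarrow> ('h \<Rightarrow> 'h \<Rightarrow> complex) \<Rightarrow> ('h \<Rightarrow> 'h) \<Rightarrow> bool" where
  "bounded_op sc ip T \<longleftrightarrow>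
     (\<forall>x y. T (x + y) = T x + T y) \<and>
     (\<forall>a x. T (sc a x) = sc a (T x)) \<and>
     (\<exists>K. \<forall>x. hnorm ip (T x) \<le> K * hnorm ip x)"

definition is_adjoint :: "('h \<Rightarrow> 'h \<Rightarrow> complex) \<Rightarrow> ('h \<Rightarrow> 'h) \<Rightarrow> ('h \<Rightarrow> 'h) \<Rightarrow> bool" where
  "is_adjoint ip T S \<longleftrightarrow> (\<forall>x y. ip (T x) y = ip x (S y))"

definition linear_into_BH ::
  "(complex \<Rightarrow> 'h::ab_group_add \<Rightarrow> 'h) \<Rightarrow> ('h \<Rightarrow> 'h \<Rightarrow> complex) \<Rightarrow> nat \<Rightarrow>
   (complex mat \<Rightarrow> 'h \<Rightarrow> 'h) \<Rightarrow> bool" where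
  "linear_into_BH sc ip n \<phi> \<longleftrightarrow>
     (\<forall>A \<in> carrier_mat n n. bounded_op sc ip (\<phi> A)) \<and>
     (\<forall>A \<in> carrier_mat n n. \<forall>B \<in> carrier_mat n n. \<forall>x. \<phi> (A + B) x = \<phi> A x + \<phi> B x) \<and>
     (\<forall>A \<in> carrier_mat n n. \<forall>c x. \<phi> (c \<cdot>\<^sub>m A) x = sc c (\<phi> A x))"

definition mat_representation ::
  "(complex \<Rightarrow> 'h::ab_group_add \<Rightarrow> 'h) \<Rightarrow> ('h \<Rightarrow> 'h \<Rightarrow> complex) \<Rightarrow> nat \<Rightarrow>
   (complex mat \<Rightarrow> 'h \<Rightarrow> 'h) \<Rightarrow> bool" where
  "mat_representation sc ip n \<pi> \<longleftrightarrow>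
     linear_into_BH sc ip n \<pi> \<and>
     (\<forall>A \<in> carrier_mat n n. \<forall>B \<in> carrier_mat n n. \<pi> (A * B) = \<pi> A \<circ> \<pi> B) \<and>
     (\<forall>A \<in> carrier_mat n n. is_adjoint ip (\<pi> A) (\<pi> (mat_adjoint A))) \<and>
     \<pi> (1\<^sub>m n) = id"

definition psd_mat :: "complex mat \<Rightarrow> bool" where
  "psd_mat M \<longleftrightarrow> M \<in> carrier_mat (dim_row M) (dim_row M) \<and>
     (\<forall>v \<in> carrier_vec (dim_row M).
        Im ((M *\<^sub>v v) \<bullet>c v) = 0 \<and> Re ((M *\<^sub>v v) \<bullet>c v) \<ge> 0)"

text \<open>The k\<times>k block matrix with n\<times>n blocks B i j, as an element of M_{kn}(C) = M_k(M_n(C)).\<close>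

definition block_mat :: "nat \<Rightarrow> nat \<Rightarrow> (nat \<Rightarrow> nat \<Rightarrow> complex mat) \<Rightarrow> complex mat" where
  "block_mat k n B = mat (k * n) (k * n) (\<lambda>(i, j). B (i div n) (j div n) $$ (i mod n, j mod n))"

text \<open>Complete positivity of \<phi> : M_n(C) \<rightarrow> B(H): for every k, the amplification
  \<phi>_k : M_k(M_n(C)) \<rightarrow> M_k(B(H)) = B(H^k) maps positive elements to positive operators,
  i.e. <\<phi>_k(B)\<xi>,\<xi>> = \<Sum>_{i,j} <\<phi>(B_ij) \<xi>_j, \<xi>_i> \<ge> 0.\<close>

definition completely_positive ::
  "(complex \<Rightarrow> 'h::ab_group_add \<Rightarrow> 'h) \<Rightarrow> ('h \<Rightarrow> 'h \<Rightarrow> complex) \<Rightarrow> nat \<Rightarrow>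
   (complex mat \<Rightarrow> 'h \<Rightarrow> 'h) \<Rightarrow> bool" where
  "completely_positive sc ip n \<phi> \<longleftrightarrow>
     (\<forall>k. \<forall>B :: nat \<Rightarrow> nat \<Rightarrow> complex mat.
        (\<forall>i<k. \<forall>j<k. B i j \<in> carrier_mat n n) \<longrightarrow> psd_mat (block_mat k n B) \<longrightarrow>
        (\<forall>\<xi> :: nat \<Rightarrow> 'h.
           Im (\<Sum>i<k. \<Sum>j<k. ip (\<phi> (B i j) (\<xi> j)) (\<xi> i)) = 0 \<and>
           Re (\<Sum>i<k. \<Sum>j<k. ip (\<phi> (B i j) (\<xi> j)) (\<xi> i)) \<ge> 0))"

definition toeplitz_system :: "nat \<Rightarrow> complex mat set" where
  "toeplitz_system n = {A \<in> carrier_mat n n.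
     \<forall>i j k l. i < n \<longrightarrow> j < n \<longrightarrow> k < n \<longrightarrow> l < n \<longrightarrow>
       int i - int j = int k - int l \<longrightarrow> A $$ (i, j) = A $$ (k, l)}"

text \<open>Unique extension property of \<pi>|_R for a representation \<pi> of M_n(C) on H:
  every completely positive linear map \<psi> : M_n(C) \<rightarrow> B(H) agreeing with \<pi> on R equals \<pi>.
  Hyperrigidity of R in M_n(C) = this holds for every Hilbert space H and every \<pi>
  (universal quantification over the type 'h in the theorem).\<close>

definition unique_extension_property ::
  "(complex \<Rightarrow> 'h::ab_group_add \<Rightarrow> 'h) \<Rightarrow> ('h \<Rightarrow> 'h \<Rightarrow> complex) \<Rightarrow> nat \<Rightarrow>
   complex mat set \<Rightarrow> (complex mat \<Rightarrow> 'h \<Rightarrow> 'h) \<Rightarrow> bool" where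
  "unique_extension_property sc ip n R \<pi> \<longleftrightarrow>
     (\<forall>\<psi>. linear_into_BH sc ip n \<psi> \<longrightarrow> completely_positive sc ip n \<psi> \<longrightarrow>
        (\<forall>A \<in> R. \<psi> A = \<pi> A) \<longrightarrow> (\<forall>A \<in> carrier_mat n n. \<psi> A = \<pi> A))"

end

theory Submission
  imports Defs
begin

(* Let \<psi> be unital completely positive and equal to \<pi> on the Toeplitz matrices.
   Positivity of the block matrix [[A\<^sup>*A, A\<^sup>*], [A, 1]] gives the Schwarz inequality
   \<pi>(A\<^sup>*A) \<le> \<psi>(A\<^sup>*A) whenever \<psi> = \<pi> at A and A\<^sup>*. For the shifts S_k, the products
   S_k\<^sup>*S_k and S_k S_k\<^sup>* are the coordinate projections onto initial and final segments of
   {0..n-1}, so on every such segment the quadratic forms of the \<pi>(E_mm) sum to at most those of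
   the \<psi>(E_mm); as \<psi>(1) = \<pi>(1), the forms of \<psi>(E_jj) and \<pi>(E_jj) coincide. Then \<psi>(E_ij) is
   compressed by the projections \<pi>(E_ii) and \<pi>(E_jj), so \<psi>(E_ij) = \<pi>(E_ii) \<psi>(T) \<pi>(E_jj) for the
   Toeplitz matrix T with ones on the diagonal through (i, j). The same holds for \<pi>, hence
   \<psi>(E_ij) = \<pi>(E_ij), and \<psi> = \<pi> by linearity. *)

section \<open>Adjoints and positive block matrices\<close>

lemma dim_row_mat_adjoint [simp]: "dim_row (mat_adjoint A) = dim_col A"
  and dim_col_mat_adjoint [simp]: "dim_col (mat_adjoint A) = dim_row A"
  by (simp_all add: mat_adjoint_def)

lemma index_mat_adjoint [simp]:
  "i < dim_col A \<Longrightarrow> j < dim_row A \<Longrightarrow> mat_adjoint A $$ (i, j) = cnj (A $$ (j, i))"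
  by (simp add: mat_adjoint_def mat_of_rows_index)

lemma mat_adjoint_carrier [simp]:
  "A \<in> carrier_mat n m \<Longrightarrow> mat_adjoint (A :: complex mat) \<in> carrier_mat m n"
  by auto

lemma mat_adjoint_adjoint [simp]: "mat_adjoint (mat_adjoint (A :: complex mat)) = A"
  by (rule eq_matI) auto

lemma mat_adjoint_smult: "mat_adjoint (c \<cdot>\<^sub>m A) = cnj c \<cdot>\<^sub>m mat_adjoint (A :: complex mat)"
  by (rule eq_matI) auto

lemma mat_adjoint_smult_mult_smult:
  fixes A :: "complex mat"
  assumes "A \<in> carrier_mat n m"
  shows "mat_adjoint (c \<cdot>\<^sub>m A) * (c \<cdot>\<^sub>m A) = (cnj c * c) \<cdot>\<^sub>m (mat_adjoint A * A)"
proof -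
  have "mat_adjoint (c \<cdot>\<^sub>m A) * (c \<cdot>\<^sub>m A) =
      c \<cdot>\<^sub>m (cnj c \<cdot>\<^sub>m (mat_adjoint A * A))"
    using assms by (simp add: mat_adjoint_smult mult_smult_assoc_mat[of _ m n] mult_smult_distrib[of _ m n])
  also have "\<dots> = (cnj c * c) \<cdot>\<^sub>m (mat_adjoint A * A)"
    by (rule eq_matI) auto
  finally show ?thesis .
qed

lemma mat_adjoint_one [simp]: "mat_adjoint (1\<^sub>m n :: complex mat) = 1\<^sub>m n"
  and mat_adjoint_zero [simp]: "mat_adjoint (0\<^sub>m n m :: complex mat) = 0\<^sub>m m n"
  by (auto intro!: eq_matI)

lemma mat_adjoint_four_block_mat:
  fixes A B C D :: "complex mat"
  assumes "A \<in> carrier_mat nr1 nc1" "B \<in> carrier_mat nr1 nc2"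
    and "C \<in> carrier_mat nr2 nc1" "D \<in> carrier_mat nr2 nc2"
  shows "mat_adjoint (four_block_mat A B C D) =
    four_block_mat (mat_adjoint A) (mat_adjoint C) (mat_adjoint B) (mat_adjoint D)"
  using assms by (intro eq_matI) auto

lemma mat_adjoint_cscalar_prod:
  fixes A :: "complex mat"
  assumes A: "A \<in> carrier_mat m k" and w: "w \<in> carrier_vec m" and v: "v \<in> carrier_vec k"
  shows "(mat_adjoint A *\<^sub>v w) \<bullet>c v = w \<bullet>c (A *\<^sub>v v)"
proof -
  have "(mat_adjoint A *\<^sub>v w) \<bullet>c v = (\<Sum>a<k. \<Sum>b<m. cnj (A $$ (b, a)) * w $ b * cnj (v $ a))"
    using A w v by (simp add: scalar_prod_def mult_mat_vec_def atLeast0LessThan sum_distrib_right)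
  also have "\<dots> = (\<Sum>b<m. \<Sum>a<k. cnj (A $$ (b, a)) * w $ b * cnj (v $ a))"
    by (rule sum.swap)
  also have "\<dots> = w \<bullet>c (A *\<^sub>v v)"
    using A w v by (simp add: scalar_prod_def mult_mat_vec_def atLeast0LessThan sum_distrib_left mult_ac)
  finally show ?thesis .
qed

lemma psd_mat_iff:
  "psd_mat M \<longleftrightarrow> M \<in> carrier_mat (dim_row M) (dim_row M) \<and>
     (\<forall>v \<in> carrier_vec (dim_row M). 0 \<le> (M *\<^sub>v v) \<bullet>c v)"
  by (auto simp: psd_mat_def less_eq_complex_def)

lemma psd_mat_adjoint_mult:
  fixes C :: "complex mat"
  assumes C: "C \<in> carrier_mat m k"
  shows "psd_mat (mat_adjoint C * C)"
  unfolding psd_mat_iff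
proof (intro conjI ballI)
  show "mat_adjoint C * C \<in> carrier_mat (dim_row (mat_adjoint C * C)) (dim_row (mat_adjoint C * C))"
    using C by auto
  fix v :: "complex vec" assume "v \<in> carrier_vec (dim_row (mat_adjoint C * C))"
  then have v: "v \<in> carrier_vec k" using C by simp
  have "(mat_adjoint C * C *\<^sub>v v) \<bullet>c v = (C *\<^sub>v v) \<bullet>c (C *\<^sub>v v)"
    using C v by (simp add: assoc_mult_mat_vec[of _ k m] mat_adjoint_cscalar_prod[OF C])
  then show "0 \<le> (mat_adjoint C * C *\<^sub>v v) \<bullet>c v"
    using conjugate_square_ge_0_vec by simp
qed

lemma block_mat_2_eq_four_block_mat:
  assumes "\<And>i j. i < 2 \<Longrightarrow> j < 2 \<Longrightarrow> B i j \<in> carrier_mat n n"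
  shows "block_mat 2 n B = four_block_mat (B 0 0) (B 0 1) (B 1 0) (B 1 1)"
proof -
  have "B 0 0 \<in> carrier_mat n n" "B 0 1 \<in> carrier_mat n n"
    "B 1 0 \<in> carrier_mat n n" "B 1 1 \<in> carrier_mat n n"
    by (simp_all add: assms)
  then show ?thesis
    by (intro eq_matI) (auto simp: block_mat_def div_if mod_if)
qed

lemma psd_block_mat_2:
  fixes A :: "complex mat"
  assumes A: "A \<in> carrier_mat n n"
  shows "psd_mat (block_mat 2 n (\<lambda>i j.
    if i = 0 then if j = 0 then mat_adjoint A * A else mat_adjoint A
    else if j = 0 then A else 1\<^sub>m n))"
proof -
  define C where "C = four_block_mat A (1\<^sub>m n) (0\<^sub>m n n) (0\<^sub>m n n)"
  have C: "C \<in> carrier_mat (n + n) (n + n)" using A by (simp add: C_def)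
  have AA: "mat_adjoint A * A \<in> carrier_mat n n" using A by (intro mult_carrier_mat mat_adjoint_carrier)
  have "mat_adjoint C * C = four_block_mat (mat_adjoint A) (0\<^sub>m n n) (1\<^sub>m n) (0\<^sub>m n n) * C"
    using A by (simp add: C_def
        mat_adjoint_four_block_mat[OF A one_carrier_mat zero_carrier_mat zero_carrier_mat])
  also have "\<dots> = four_block_mat (mat_adjoint A * A) (mat_adjoint A) A (1\<^sub>m n)"
    using A by (simp add: C_def mult_four_block_mat[OF mat_adjoint_carrier[OF A] zero_carrier_mat
        one_carrier_mat zero_carrier_mat A one_carrier_mat zero_carrier_mat zero_carrier_mat]
        right_add_zero_mat[OF AA])
  finally show ?thesis
    using psd_mat_adjoint_mult[OF C] A AA by (subst block_mat_2_eq_four_block_mat) auto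
qed

section \<open>Matrix units, coordinate projections and Toeplitz matrices\<close>

definition mat_unit :: "nat \<Rightarrow> nat \<times> nat \<Rightarrow> complex mat" where
  "mat_unit n p = mat n n (\<lambda>q. if q = p then 1 else 0)"

lemma mat_unit_carrier [simp]: "mat_unit n p \<in> carrier_mat n n"
  by (simp add: mat_unit_def)

lemma mat_adjoint_mat_unit [simp]: "mat_adjoint (mat_unit n (i, j)) = mat_unit n (j, i)"
  by (rule eq_matI) (auto simp: mat_unit_def)

lemma mat_unit_mult:
  assumes "i < n" "j < n" "k < n" "l < n"
  shows "mat_unit n (i, j) * mat_unit n (k, l) = (if j = k then mat_unit n (i, l) else 0\<^sub>m n n)"
proof (rule eq_matI)
  fix a b assume "a < dim_row (if j = k then mat_unit n (i, l) else 0\<^sub>m n n)"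
    and "b < dim_col (if j = k then mat_unit n (i, l) else 0\<^sub>m n n)"
  then have a: "a < n" and b: "b < n" by (auto simp: mat_unit_def split: if_splits)
  have "(mat_unit n (i, j) * mat_unit n (k, l)) $$ (a, b) =
      (\<Sum>c<n. (if (a, c) = (i, j) then 1 else 0) * (if (c, b) = (k, l) then 1 else 0))"
    using a b by (simp add: mat_unit_def scalar_prod_def atLeast0LessThan)
  also have "\<dots> = (\<Sum>c<n. if c = j then (if a = i \<and> j = k \<and> b = l then 1 else 0) else 0)"
    by (intro sum.cong) auto
  finally show "(mat_unit n (i, j) * mat_unit n (k, l)) $$ (a, b) =
      (if j = k then mat_unit n (i, l) else 0\<^sub>m n n) $$ (a, b)"
    using a b assms by (simp add: mat_unit_def)
qed (auto simp: mat_unit_def)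

definition coord_proj_mat :: "nat \<Rightarrow> nat set \<Rightarrow> complex mat" where
  "coord_proj_mat n I = mat n n (\<lambda>(a, b). if a = b \<and> a \<in> I then 1 else 0)"

lemma one_mat_eq_coord_proj_mat: "1\<^sub>m n = coord_proj_mat n {..<n}"
  by (rule eq_matI) (auto simp: coord_proj_mat_def)

definition toeplitz_mat :: "nat \<Rightarrow> (int \<Rightarrow> complex) \<Rightarrow> complex mat" where
  "toeplitz_mat n t = mat n n (\<lambda>(k, l). t (int k - int l))"

lemma toeplitz_mat_carrier [simp]: "toeplitz_mat n t \<in> carrier_mat n n"
  by (simp add: toeplitz_mat_def)

lemma toeplitz_mat_in_system: "toeplitz_mat n t \<in> toeplitz_system n"
  by (auto simp: toeplitz_system_def toeplitz_mat_def)

lemma mat_adjoint_toeplitz_mat: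
  "mat_adjoint (toeplitz_mat n t) = toeplitz_mat n (\<lambda>d. cnj (t (- d)))"
  by (rule eq_matI) (auto simp: toeplitz_mat_def)

lemma one_mat_in_toeplitz_system: "1\<^sub>m n \<in> toeplitz_system n"
proof -
  have "1\<^sub>m n = toeplitz_mat n (\<lambda>d. if d = 0 then 1 else 0)"
    by (rule eq_matI) (auto simp: toeplitz_mat_def)
  then show ?thesis by (simp add: toeplitz_mat_in_system)
qed

definition shift_mat :: "nat \<Rightarrow> nat \<Rightarrow> complex mat" where
  "shift_mat n k = toeplitz_mat n (\<lambda>d. if d = int k then 1 else 0)"

lemma shift_mat_carrier [simp]: "shift_mat n k \<in> carrier_mat n n"
  and dim_row_shift_mat [simp]: "dim_row (shift_mat n k) = n"
  and dim_col_shift_mat [simp]: "dim_col (shift_mat n k) = n"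
  by (simp_all add: shift_mat_def toeplitz_mat_def)

lemma index_shift_mat:
  "a < n \<Longrightarrow> b < n \<Longrightarrow> shift_mat n k $$ (a, b) = (if a = b + k then 1 else 0)"
  by (auto simp: shift_mat_def toeplitz_mat_def)

lemma shift_mat_in_system: "shift_mat n k \<in> toeplitz_system n"
  and mat_adjoint_shift_mat_in_system: "mat_adjoint (shift_mat n k) \<in> toeplitz_system n"
  by (simp_all add: shift_mat_def mat_adjoint_toeplitz_mat toeplitz_mat_in_system)

lemma shift_mat_adjoint_mult: "mat_adjoint (shift_mat n k) * shift_mat n k = coord_proj_mat n {..<n - k}"
proof (rule eq_matI)
  fix a b assume "a < dim_row (coord_proj_mat n {..<n - k})" "b < dim_col (coord_proj_mat n {..<n - k})"
  then have a: "a < n" and b: "b < n" by (auto simp: coord_proj_mat_def)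
  have "(mat_adjoint (shift_mat n k) * shift_mat n k) $$ (a, b) =
      (\<Sum>c<n. cnj (if c = a + k then 1 else 0) * (if c = b + k then 1 else 0))"
    using a b by (simp add: index_shift_mat scalar_prod_def atLeast0LessThan)
  also have "\<dots> = (\<Sum>c<n. if c = a + k then (if a = b then 1 else 0) else 0)"
    by (intro sum.cong) auto
  finally show "(mat_adjoint (shift_mat n k) * shift_mat n k) $$ (a, b) =
      coord_proj_mat n {..<n - k} $$ (a, b)"
    using a b by (auto simp: coord_proj_mat_def)
qed (auto simp: coord_proj_mat_def)

lemma shift_mat_mult_adjoint: "shift_mat n k * mat_adjoint (shift_mat n k) = coord_proj_mat n {k..<n}"
proof (rule eq_matI)
  fix a b assume "a < dim_row (coord_proj_mat n {k..<n})" "b < dim_col (coord_proj_mat n {k..<n})"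
  then have a: "a < n" and b: "b < n" by (auto simp: coord_proj_mat_def)
  have "(shift_mat n k * mat_adjoint (shift_mat n k)) $$ (a, b) =
      (\<Sum>c<n. (if a = c + k then 1 else 0) * cnj (if b = c + k then 1 else 0))"
    using a b by (simp add: index_shift_mat scalar_prod_def atLeast0LessThan)
  also have "\<dots> = (\<Sum>c<n. if c = a - k then (if k \<le> a \<and> a = b then 1 else 0) else 0)"
    by (intro sum.cong) auto
  finally show "(shift_mat n k * mat_adjoint (shift_mat n k)) $$ (a, b) = coord_proj_mat n {k..<n} $$ (a, b)"
    using a b by (auto simp: coord_proj_mat_def)
qed (auto simp: coord_proj_mat_def)

section \<open>Hilbert spaces and linear maps into B(H)\<close>

lemma eq_if_prefix_and_suffix_sums_le:
  fixes p q :: "nat \<Rightarrow> 'a::ordered_ab_group_add"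
  assumes prefix: "\<And>i. i \<le> n \<Longrightarrow> sum p {..<i} \<le> sum q {..<i}"
    and suffix: "\<And>i. i \<le> n \<Longrightarrow> sum p {i..<n} \<le> sum q {i..<n}"
    and total: "sum p {..<n} = sum q {..<n}"
    and j: "j < n"
  shows "p j = q j"
proof -
  have prefix_eq: "sum p {..<i} = sum q {..<i}" if i: "i \<le> n" for i
  proof (rule antisym)
    show "sum p {..<i} \<le> sum q {..<i}" using prefix[OF i] .
    have split: "sum f {..<n} = sum f {..<i} + sum f {i..<n}" for f :: "nat \<Rightarrow> 'a"
      using sum.atLeastLessThan_concat[of 0 i n f] i by (simp add: atLeast0LessThan)
    have "sum q {..<i} = sum p {..<i} + sum p {i..<n} - sum q {i..<n}"
      using total split[of p] split[of q] by (simp add: algebra_simps)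
    also have "\<dots> \<le> sum p {..<i}"
      using suffix[OF i] by (simp add: algebra_simps)
    finally show "sum q {..<i} \<le> sum p {..<i}" .
  qed
  show ?thesis using prefix_eq[of "Suc j"] prefix_eq[of j] j by simp
qed

lemma eq_0_if_real_affine_nonneg:
  fixes w r :: complex
  assumes nonneg: "\<And>t::real. 0 \<le> t *\<^sub>R w + r"
  shows "w = 0"
proof -
  have im: "t * Im w + Im r = 0" and re: "0 \<le> t * Re w + Re r" for t
    using nonneg[of t] by (simp_all add: less_eq_complex_def)
  have "Im w = 0" using im[of 0] im[of 1] by simp
  moreover have "Re w = 0"
  proof (rule ccontr)
    assume "Re w \<noteq> 0"
    then have "- (\<bar>Re r\<bar> + 1) / Re w * Re w + Re r < 0" by simp
    with re show False by (metis not_le)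
  qed
  ultimately show ?thesis by (simp add: complex_eq_iff)
qed

lemma eq_0_if_cnj_affine_nonneg:
  fixes \<alpha> \<beta> r :: complex
  assumes nonneg: "\<And>c. 0 \<le> cnj c * \<alpha> + c * \<beta> + r"
  shows "\<alpha> = 0" and "\<beta> = 0"
proof -
  have "\<alpha> + \<beta> = 0"
  proof (rule eq_0_if_real_affine_nonneg)
    show "0 \<le> t *\<^sub>R (\<alpha> + \<beta>) + r" for t
      using nonneg[of "complex_of_real t"] by (simp add: scaleR_conv_of_real algebra_simps)
  qed
  moreover have "\<i> * (\<beta> - \<alpha>) = 0"
  proof (rule eq_0_if_real_affine_nonneg)
    show "0 \<le> t *\<^sub>R (\<i> * (\<beta> - \<alpha>)) + r" for t
      using nonneg[of "\<i> * complex_of_real t"] by (simp add: scaleR_conv_of_real algebra_simps)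
  qed
  ultimately show "\<alpha> = 0" and "\<beta> = 0" by (simp_all add: algebra_simps)
qed

locale complex_hilbert =
  fixes sc :: "complex \<Rightarrow> 'h::ab_group_add \<Rightarrow> 'h" and ip :: "'h \<Rightarrow> 'h \<Rightarrow> complex"
  assumes hilbert: "complex_hilbert_space sc ip"
begin

lemma scale_add_right: "sc a (x + y) = sc a x + sc a y"
  using hilbert unfolding complex_hilbert_space_def by meson

lemma scale_one [simp]: "sc 1 x = x"
  using hilbert unfolding complex_hilbert_space_def by meson

lemma ip_add_left: "ip (x + y) z = ip x z + ip y z"
  using hilbert unfolding complex_hilbert_space_def by meson

lemma ip_scale_left [simp]: "ip (sc a x) y = a * ip x y"
  using hilbert unfolding complex_hilbert_space_def by meson

lemma ip_cnj_commute: "ip y x = cnj (ip x y)"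
  using hilbert unfolding complex_hilbert_space_def by meson

lemma ip_self_eq_0: "ip x x = 0 \<Longrightarrow> x = 0"
  using hilbert unfolding complex_hilbert_space_def by meson

lemma ip_add_right: "ip x (y + z) = ip x y + ip x z"
  by (metis ip_add_left ip_cnj_commute complex_cnj_add)

lemma additive_ip_left: "additive (\<lambda>x. ip x z)"
  by unfold_locales (rule ip_add_left)

lemma additive_ip_right: "additive (ip z)"
  by unfold_locales (rule ip_add_right)

lemma ip_zero_left [simp]: "ip 0 y = 0"
  and ip_minus_left: "ip (- x) y = - ip x y"
  and ip_minus_right: "ip x (- y) = - ip x y"
  and ip_diff_left: "ip (x - x') y = ip x y - ip x' y"
  and ip_sum_left: "ip (\<Sum>i\<in>I. f i) y = (\<Sum>i\<in>I. ip (f i) y)"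
  using additive.zero[OF additive_ip_left] additive.minus[OF additive_ip_left]
    additive.minus[OF additive_ip_right]
    additive.diff[OF additive_ip_left] additive.sum[OF additive_ip_left] by simp_all

lemma scale_zero_right [simp]: "sc a 0 = 0"
  using scale_add_right[of a 0 0] by simp

end

lemma bounded_op_additive: "bounded_op sc ip T \<Longrightarrow> additive T"
  by unfold_locales (simp add: bounded_op_def)

lemma bounded_op_scale: "bounded_op sc ip T \<Longrightarrow> T (sc a x) = sc a (T x)"
  by (simp add: bounded_op_def)

context
  fixes sc :: "complex \<Rightarrow> 'h::ab_group_add \<Rightarrow> 'h" and ip :: "'h \<Rightarrow> 'h \<Rightarrow> complex"
    and n :: nat and \<phi> :: "complex mat \<Rightarrow> 'h \<Rightarrow> 'h"
  assumes \<phi>: "linear_into_BH sc ip n \<phi>"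
begin

lemma linear_into_BH_bounded_op: "A \<in> carrier_mat n n \<Longrightarrow> bounded_op sc ip (\<phi> A)"
  and linear_into_BH_add: "A \<in> carrier_mat n n \<Longrightarrow> B \<in> carrier_mat n n \<Longrightarrow> \<phi> (A + B) x = \<phi> A x + \<phi> B x"
  and linear_into_BH_smult: "A \<in> carrier_mat n n \<Longrightarrow> \<phi> (c \<cdot>\<^sub>m A) x = sc c (\<phi> A x)"
  using \<phi> by (simp_all add: linear_into_BH_def)

lemma linear_into_BH_additive: "A \<in> carrier_mat n n \<Longrightarrow> additive (\<phi> A)"
  by (rule bounded_op_additive, rule linear_into_BH_bounded_op)

lemma linear_into_BH_zero: "\<phi> (0\<^sub>m n n) x = 0"
  using linear_into_BH_add[of "0\<^sub>m n n" "0\<^sub>m n n" x] by simp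

lemma linear_into_BH_expansion:
  assumes S: "S \<subseteq> {..<n} \<times> {..<n}"
  shows "\<phi> (mat n n (\<lambda>p. if p \<in> S then f p else 0)) x =
    (\<Sum>p\<in>S. sc (f p) (\<phi> (mat_unit n p) x))"
proof -
  have "finite S" using S by (rule finite_subset) simp
  then show ?thesis using S
  proof (induction S rule: finite_induct)
    case empty
    have "mat n n (\<lambda>p. if p \<in> {} then f p else 0) = 0\<^sub>m n n" by (rule eq_matI) auto
    then show ?case by (simp add: linear_into_BH_zero)
  next
    case (insert p S)
    have "mat n n (\<lambda>q. if q \<in> insert p S then f q else 0) =
        mat n n (\<lambda>q. if q \<in> S then f q else 0) + f p \<cdot>\<^sub>m mat_unit n p"
      using insert.hyps insert.prems by (intro eq_matI) (auto simp: mat_unit_def)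
    moreover have "mat n n (\<lambda>q. if q \<in> S then f q else 0) \<in> carrier_mat n n" by simp
    ultimately show ?case
      using insert by (simp add: linear_into_BH_add linear_into_BH_smult sum.insert_remove)
  qed
qed

lemma linear_into_BH_eq_sum_mat_units:
  assumes A: "A \<in> carrier_mat n n"
  shows "\<phi> A x = (\<Sum>p\<in>{..<n} \<times> {..<n}. sc (A $$ p) (\<phi> (mat_unit n p) x))"
proof -
  have "mat n n (\<lambda>p. if p \<in> {..<n} \<times> {..<n} then A $$ p else 0) = A"
    using A by (intro eq_matI) auto
  then show ?thesis
    using linear_into_BH_expansion[OF order_refl, of "\<lambda>p. A $$ p" x] by (simp only:)
qed

end

lemma (in complex_hilbert) linear_into_BH_coord_proj_form:
  assumes \<phi>: "linear_into_BH sc ip n \<phi>" and I: "I \<subseteq> {..<n}"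
  shows "ip (\<phi> (coord_proj_mat n I) x) x = (\<Sum>m\<in>I. ip (\<phi> (mat_unit n (m, m)) x) x)"
proof -
  have "coord_proj_mat n I = mat n n (\<lambda>p. if p \<in> (\<lambda>m. (m, m)) ` I then 1 else 0)"
    by (rule eq_matI) (auto simp: coord_proj_mat_def)
  moreover have "(\<lambda>m. (m, m)) ` I \<subseteq> {..<n} \<times> {..<n}" using I by auto
  ultimately show ?thesis
    by (simp add: linear_into_BH_expansion[OF \<phi>] ip_sum_left sum.reindex inj_on_def)
qed

section \<open>Completely positive maps compared with a representation\<close>

locale mat_rep = complex_hilbert sc ip
  for sc :: "complex \<Rightarrow> 'h::ab_group_add \<Rightarrow> 'h" and ip +
  fixes n :: nat and \<pi> :: "complex mat \<Rightarrow> 'h \<Rightarrow> 'h"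
  assumes representation: "mat_representation sc ip n \<pi>"
begin

lemma rep_linear: "linear_into_BH sc ip n \<pi>"
  using representation by (simp add: mat_representation_def)

lemma rep_mult:
  "A \<in> carrier_mat n n \<Longrightarrow> B \<in> carrier_mat n n \<Longrightarrow> \<pi> (A * B) x = \<pi> A (\<pi> B x)"
  using representation by (simp add: mat_representation_def)

lemma rep_adjoint: "A \<in> carrier_mat n n \<Longrightarrow> ip (\<pi> A x) y = ip x (\<pi> (mat_adjoint A) y)"
  using representation by (simp add: mat_representation_def is_adjoint_def)

lemma rep_one: "\<pi> (1\<^sub>m n) = id"
  using representation by (simp add: mat_representation_def)

abbreviation proj :: "nat \<Rightarrow> 'h \<Rightarrow> 'h" where
  "proj j \<equiv> \<pi> (mat_unit n (j, j))"

lemma proj_proj: "a < n \<Longrightarrow> b < n \<Longrightarrow> proj a (proj b x) = (if a = b then proj b x else 0)"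
  using rep_mult[of "mat_unit n (a, a)" "mat_unit n (b, b)" x] mat_unit_mult[of a n a b b]
    linear_into_BH_zero[OF rep_linear] by auto

lemma proj_selfadjoint: "ip (proj j u) v = ip u (proj j v)"
  using rep_adjoint[of "mat_unit n (j, j)" u v] by simp

lemma proj_zero [simp]: "proj j 0 = 0"
  using additive.zero[OF linear_into_BH_additive[OF rep_linear mat_unit_carrier]] .

lemma rep_mat_unit_compressed:
  assumes a: "a < n" and b: "b < n"
  shows "\<pi> (mat_unit n (a, b)) x = proj a (\<pi> (mat_unit n (a, b)) (proj b x))"
proof -
  have "mat_unit n (a, a) * (mat_unit n (a, b) * mat_unit n (b, b)) = mat_unit n (a, b)"
    using mat_unit_mult[OF a b b b] mat_unit_mult[OF a a a b] by simp
  then show ?thesis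
    using rep_mult[of "mat_unit n (a, a)" "mat_unit n (a, b) * mat_unit n (b, b)" x]
      rep_mult[of "mat_unit n (a, b)" "mat_unit n (b, b)"]
      mult_carrier_mat[OF mat_unit_carrier mat_unit_carrier] by simp
qed

lemma compression_eq_entry_scale:
  assumes \<phi>: "linear_into_BH sc ip n \<phi>"
    and compressed: "\<And>a b x. a < n \<Longrightarrow> b < n \<Longrightarrow>
      \<phi> (mat_unit n (a, b)) x = proj a (\<phi> (mat_unit n (a, b)) (proj b x))"
    and T: "T \<in> carrier_mat n n" and i: "i < n" and j: "j < n"
  shows "proj i (\<phi> T (proj j x)) = sc (T $$ (i, j)) (\<phi> (mat_unit n (i, j)) x)"
proof -
  have unit: "proj i (\<phi> (mat_unit n p) (proj j x)) =
      (if p = (i, j) then \<phi> (mat_unit n (i, j)) x else 0)"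
    if p_range: "p \<in> {..<n} \<times> {..<n}" for p
  proof -
    obtain a b where p: "p = (a, b)" and a: "a < n" and b: "b < n"
      using p_range by auto
    have zero: "\<phi> (mat_unit n p) 0 = 0"
      using additive.zero[OF linear_into_BH_additive[OF \<phi> mat_unit_carrier]] .
    have "proj i (\<phi> (mat_unit n p) (proj j x)) =
        proj i (proj a (\<phi> (mat_unit n p) (proj b (proj j x))))"
      using compressed[OF a b, of "proj j x"] p by simp
    also have "\<dots> = (if p = (i, j) then \<phi> (mat_unit n (i, j)) x else 0)"
      using proj_proj[OF i a] proj_proj[OF b j] compressed[OF i j, of x] zero p
      by (auto simp: proj_proj[OF i i])
    finally show ?thesis .
  qed
  have "proj i (\<phi> T (proj j x)) =
      (\<Sum>p\<in>{..<n} \<times> {..<n}. proj i (sc (T $$ p) (\<phi> (mat_unit n p) (proj j x))))"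
    unfolding linear_into_BH_eq_sum_mat_units[OF \<phi> T]
    by (rule additive.sum[OF linear_into_BH_additive[OF rep_linear mat_unit_carrier]])
  also have "\<dots> = (\<Sum>p\<in>{..<n} \<times> {..<n}.
      if p = (i, j) then sc (T $$ (i, j)) (\<phi> (mat_unit n (i, j)) x) else 0)"
    using unit
    by (intro sum.cong) (auto simp: bounded_op_scale[OF linear_into_BH_bounded_op[OF rep_linear]])
  also have "\<dots> = sc (T $$ (i, j)) (\<phi> (mat_unit n (i, j)) x)"
    using i j by simp
  finally show ?thesis .
qed

end

locale ucp_map = mat_rep sc ip n \<pi>
  for sc :: "complex \<Rightarrow> 'h::ab_group_add \<Rightarrow> 'h" and ip n \<pi> +
  fixes \<psi> :: "complex mat \<Rightarrow> 'h \<Rightarrow> 'h"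
  assumes cp_linear: "linear_into_BH sc ip n \<psi>"
    and cp: "completely_positive sc ip n \<psi>"
    and cp_unital: "\<psi> (1\<^sub>m n) = id"
begin

lemma cp_two_by_two:
  assumes A: "A \<in> carrier_mat n n"
  shows "0 \<le> ip (\<psi> (mat_adjoint A * A) x) x + ip (\<psi> (mat_adjoint A) y) x +
    ip (\<psi> A x) y + ip y y"
proof -
  define B where "B = (\<lambda>(i :: nat) (j :: nat).
    if i = 0 then if j = 0 then mat_adjoint A * A else mat_adjoint A
    else if j = 0 then A else 1\<^sub>m n)"
  define \<xi> where "\<xi> = (\<lambda>i :: nat. if i = 0 then x else y)"
  have "\<forall>i<2. \<forall>j<2. B i j \<in> carrier_mat n n"
    using A by (auto simp: B_def intro!: mult_carrier_mat)
  moreover have "psd_mat (block_mat 2 n B)"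
    unfolding B_def by (rule psd_block_mat_2[OF A])
  ultimately have "0 \<le> (\<Sum>i<2. \<Sum>j<2. ip (\<psi> (B i j) (\<xi> j)) (\<xi> i))"
    using cp unfolding completely_positive_def less_eq_complex_def by simp
  also have "(\<Sum>i<2. \<Sum>j<2. ip (\<psi> (B i j) (\<xi> j)) (\<xi> i)) =
      ip (\<psi> (mat_adjoint A * A) x) x + ip (\<psi> (mat_adjoint A) y) x + ip (\<psi> A x) y + ip y y"
    by (simp add: numeral_2_eq_2 B_def \<xi>_def cp_unital)
  finally show ?thesis .
qed

lemma schwarz_le:
  assumes A: "A \<in> carrier_mat n n" and "\<psi> A = \<pi> A" and "\<psi> (mat_adjoint A) = \<pi> (mat_adjoint A)"
  shows "ip (\<pi> (mat_adjoint A * A) x) x \<le> ip (\<psi> (mat_adjoint A * A) x) x"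
proof -
  define u where "u = \<pi> A x"
  have form: "ip (\<pi> (mat_adjoint A) v) x = ip v u" for v
    using rep_adjoint[of "mat_adjoint A" v x] A by (simp add: u_def)
  have "ip (\<pi> (mat_adjoint A * A) x) x = ip u u"
    using A form by (simp add: rep_mult u_def)
  moreover have "0 \<le> ip (\<psi> (mat_adjoint A * A) x) x - ip u u"
    using cp_two_by_two[OF A, of x "- u"] assms(2,3) form
    by (simp add: u_def ip_minus_left ip_minus_right)
  ultimately show ?thesis by simp
qed

lemma cp_kernel:
  assumes A: "A \<in> carrier_mat n n" and null: "ip (\<psi> (mat_adjoint A * A) x) x = 0"
  shows "\<psi> A x = 0" and "ip (\<psi> (mat_adjoint A) y) x = 0"
proof -
  have AA: "mat_adjoint A * A \<in> carrier_mat n n"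
    using A by (intro mult_carrier_mat mat_adjoint_carrier)
  \<comment> \<open>replacing A by c A makes the 2x2 positivity affine in c and cnj c\<close>
  have nonneg: "0 \<le> cnj c * ip (\<psi> (mat_adjoint A) y) x + c * ip (\<psi> A x) y + ip y y" for c y
  proof -
    have "ip (\<psi> (mat_adjoint (c \<cdot>\<^sub>m A) * (c \<cdot>\<^sub>m A)) x) x = 0"
      using null
      by (simp add: mat_adjoint_smult_mult_smult[OF A] linear_into_BH_smult[OF cp_linear AA])
    then show ?thesis
      using cp_two_by_two[of "c \<cdot>\<^sub>m A" x y] A
      by (simp add: mat_adjoint_smult linear_into_BH_smult[OF cp_linear])
  qed
  show "ip (\<psi> (mat_adjoint A) y) x = 0"
    using nonneg by (rule eq_0_if_cnj_affine_nonneg)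
  have "ip (\<psi> A x) (\<psi> A x) = 0"
    using nonneg by (rule eq_0_if_cnj_affine_nonneg)
  then show "\<psi> A x = 0" by (rule ip_self_eq_0)
qed

lemma mat_unit_compressed_if_diag_forms_agree:
  assumes diag: "\<And>j x. j < n \<Longrightarrow> ip (\<psi> (mat_unit n (j, j)) x) x = ip (proj j x) x"
    and a: "a < n" and b: "b < n"
  shows "\<psi> (mat_unit n (a, b)) x = proj a (\<psi> (mat_unit n (a, b)) (proj b x))"
proof -
  have kernel: "\<psi> (mat_unit n (i, j)) u = 0 \<and> ip (\<psi> (mat_unit n (j, i)) y) u = 0"
    if "i < n" "j < n" "proj j u = 0" for i j u y
  proof -
    have "ip (\<psi> (mat_adjoint (mat_unit n (i, j)) * mat_unit n (i, j)) u) u = 0"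
      using that diag[of j u] by (simp add: mat_unit_mult)
    then show ?thesis using cp_kernel[of "mat_unit n (i, j)" u] by simp
  qed
  interpret Pa: additive "proj a" by (rule linear_into_BH_additive[OF rep_linear mat_unit_carrier])
  interpret Pb: additive "proj b" by (rule linear_into_BH_additive[OF rep_linear mat_unit_carrier])
  interpret E: additive "\<psi> (mat_unit n (a, b))"
    by (rule linear_into_BH_additive[OF cp_linear mat_unit_carrier])
  have right: "\<psi> (mat_unit n (a, b)) x = \<psi> (mat_unit n (a, b)) (proj b x)"
  proof -
    have "proj b (x - proj b x) = 0" using proj_proj[OF b b] by (simp add: Pb.diff)
    then have "\<psi> (mat_unit n (a, b)) (x - proj b x) = 0" using kernel[OF a b] by blast
    then show ?thesis by (simp add: E.diff)
  qed
  have left: "w = proj a w" if "w = \<psi> (mat_unit n (a, b)) y" for w y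
  proof -
    define z where "z = w - proj a w"
    have "proj a z = 0" using proj_proj[OF a a] by (simp add: z_def Pa.diff)
    then have "ip w z = 0" and "ip (proj a w) z = 0"
      using kernel[OF b a] that by (auto simp: proj_selfadjoint)
    then have "ip z z = 0" by (simp add: z_def ip_diff_left)
    then have "z = 0" by (rule ip_self_eq_0)
    then show ?thesis by (simp add: z_def)
  qed
  show ?thesis using right left by simp
qed

end

locale toeplitz_cp_extension = ucp_map +
  assumes toeplitz_agree: "A \<in> toeplitz_system n \<Longrightarrow> \<psi> A = \<pi> A"
begin

lemma diag_forms_agree:
  assumes j: "j < n"
  shows "ip (\<psi> (mat_unit n (j, j)) x) x = ip (proj j x) x"
proof -
  define p where "p m = ip (proj m x) x" for m
  define q where "q m = ip (\<psi> (mat_unit n (m, m)) x) x" for m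
  note rep_form = linear_into_BH_coord_proj_form[OF rep_linear]
  note cp_form = linear_into_BH_coord_proj_form[OF cp_linear]
  have prefix: "sum p {..<i} \<le> sum q {..<i}" if "i \<le> n" for i
  proof -
    let ?S = "shift_mat n (n - i)"
    have "ip (\<pi> (mat_adjoint ?S * ?S) x) x \<le> ip (\<psi> (mat_adjoint ?S * ?S) x) x"
      by (rule schwarz_le) (simp_all add: toeplitz_agree shift_mat_in_system mat_adjoint_shift_mat_in_system)
    then show ?thesis
      using that by (simp add: shift_mat_adjoint_mult rep_form cp_form p_def q_def)
  qed
  have suffix: "sum p {i..<n} \<le> sum q {i..<n}" for i
  proof -
    let ?S = "mat_adjoint (shift_mat n i)"
    have "ip (\<pi> (mat_adjoint ?S * ?S) x) x \<le> ip (\<psi> (mat_adjoint ?S * ?S) x) x"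
      by (rule schwarz_le) (simp_all add: toeplitz_agree shift_mat_in_system mat_adjoint_shift_mat_in_system)
    moreover have "{i..<n} \<subseteq> {..<n}" by auto
    ultimately show ?thesis
      by (simp add: shift_mat_mult_adjoint rep_form cp_form p_def q_def)
  qed
  have total: "sum p {..<n} = sum q {..<n}"
    using rep_form[of "{..<n}" x] cp_form[of "{..<n}" x]
    by (simp add: one_mat_eq_coord_proj_mat[symmetric] rep_one cp_unital p_def q_def)
  show ?thesis
    using eq_if_prefix_and_suffix_sums_le[OF prefix suffix total j] by (simp add: p_def q_def)
qed

lemma mat_unit_agree:
  assumes i: "i < n" and j: "j < n"
  shows "\<psi> (mat_unit n (i, j)) x = \<pi> (mat_unit n (i, j)) x"
proof -
  define T where "T = toeplitz_mat n (\<lambda>d. if d = int i - int j then 1 else 0)"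
  have T: "T \<in> carrier_mat n n" and Tij: "T $$ (i, j) = 1"
    using i j by (simp_all add: T_def toeplitz_mat_def)
  have "\<psi> (mat_unit n (i, j)) x = proj i (\<psi> T (proj j x))"
    using compression_eq_entry_scale[OF cp_linear mat_unit_compressed_if_diag_forms_agree[OF diag_forms_agree]
        T i j] Tij by simp
  also have "\<dots> = proj i (\<pi> T (proj j x))"
    by (simp add: T_def toeplitz_agree toeplitz_mat_in_system)
  also have "\<dots> = \<pi> (mat_unit n (i, j)) x"
    using compression_eq_entry_scale[OF rep_linear rep_mat_unit_compressed T i j] Tij by simp
  finally show ?thesis .
qed

lemma toeplitz_extension_eq:
  assumes A: "A \<in> carrier_mat n n"
  shows "\<psi> A = \<pi> A"
proof
  fix x
  show "\<psi> A x = \<pi> A x"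
    unfolding linear_into_BH_eq_sum_mat_units[OF cp_linear A] linear_into_BH_eq_sum_mat_units[OF rep_linear A]
    by (intro sum.cong refl) (auto simp: mat_unit_agree)
qed

end

theorem proposition2p3:
  fixes n :: nat
    and sc :: "complex \<Rightarrow> 'h::ab_group_add \<Rightarrow> 'h"
    and ip :: "'h \<Rightarrow> 'h \<Rightarrow> complex"
    and \<pi> :: "complex mat \<Rightarrow> 'h \<Rightarrow> 'h"
  assumes "n \<ge> 2"
    and "complex_hilbert_space sc ip"
    and "mat_representation sc ip n \<pi>"
  shows "unique_extension_property sc ip n (toeplitz_system n) \<pi>"
  unfolding unique_extension_property_def
proof (intro allI impI ballI)
  fix \<psi> and A :: "complex mat"
  assume linear: "linear_into_BH sc ip n \<psi>" and cp: "completely_positive sc ip n \<psi>"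
    and agree: "\<forall>A \<in> toeplitz_system n. \<psi> A = \<pi> A" and A: "A \<in> carrier_mat n n"
  interpret mat_rep sc ip n \<pi>
    using assms(2,3) by unfold_locales
  have "\<psi> (1\<^sub>m n) = id"
    using agree one_mat_in_toeplitz_system rep_one by simp
  then interpret toeplitz_cp_extension sc ip n \<pi> \<psi>
    using linear cp agree by unfold_locales simp_all
  show "\<psi> A = \<pi> A" by (rule toeplitz_extension_eq[OF A])
qed

end
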